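(* Let $m,n\ge1$, let $E$ be a linear subspace of $\mathbb{C}^{n\times m}$, let $\lambda_0\in\mathbb{D}\setminus\{0\}$ and let $W\in\mathbb{C}^{m\times n}$. There exists a holomorphic $F:\mathbb{D}\to\mathbb{C}^{m\times n}$ with every entry in the Nevanlinna class such that $F(0)=0$, $F(\lambda_0)=W$ and $\mu_E(F(\lambda))<1$ for all $\lambda\in\mathbb{D}$, if and only if $\mu_E(W)\le|\lambda_0|$.
   Context: $\mathbb{D}$ is the open unit disc. For $A\in\mathbb{C}^{m\times n}$, $\mu_E(A)$ is defined by $1/\mu_E(A)=\inf\{\|X\|:X\in E,\ \det(I-AX)=0\}$ (operator norm; $\mu_E(A)=0$ if no such $X$ exists). The Nevanlinna class $N$ consists of holomorphic functions $f$ on $\mathbb{D}$ with $\sup_{0<r<1}\int_0^{2\pi}\log^+|f(re^{i\theta})|\,d\theta<\infty$. *)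

theory Defs
  imports "HOL-Analysis.Analysis"
begin

definition cmat_subspace :: "(complex^'c^'r) set \<Rightarrow> bool" where
  "cmat_subspace E \<longleftrightarrow> 0 \<in> E \<and> (\<forall>X\<in>E. \<forall>Y\<in>E. X + Y \<in> E) \<and>
     (\<forall>c X. X \<in> E \<longrightarrow> (\<chi> i j. c * X $ i $ j) \<in> E)"

definition opnorm :: "complex^'c^'r \<Rightarrow> real" where
  "opnorm X = onorm (\<lambda>v. X *v v)"

definition mu :: "(complex^'m^'n) set \<Rightarrow> complex^'n^'m \<Rightarrow> real" where
  "mu E A = (if {X \<in> E. det (mat 1 - A ** X) = 0} = {} then 0
             else 1 / Inf (opnorm ` {X \<in> E. det (mat 1 - A ** X) = 0}))"

definition logplus :: "real \<Rightarrow> real" where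
  "logplus x = (if x \<le> 1 then 0 else ln x)"

definition nevanlinna :: "(complex \<Rightarrow> complex) \<Rightarrow> bool" where
  "nevanlinna f \<longleftrightarrow> f holomorphic_on ball 0 1 \<and>
     bdd_above ((\<lambda>r. integral {0..2*pi} (\<lambda>t. logplus (cmod (f (complex_of_real r * cis t))))) ` {0<..<1})"

end

theory Submission
  imports Defs "HOL-Complex_Analysis.Complex_Analysis" "HOL-Real_Asymp.Real_Asymp"
begin

(* Sufficiency: if mu_E(W) <= |l0|, the linear map F(z) = (z/l0) W works, because
   mu_E is absolutely homogeneous from above, mu_E(c A) <= |c| mu_E(A), when E is
   closed under scalars; linear functions are trivially of Nevanlinna class.

   Necessity: write F(z) = z G(z) with G holomorphic.  If mu_E(W) > |l0|, pick
   Y in E with det(I - W Y) = 0 and |l0| ||Y|| < 1, put X = l0 Y and consider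
   q_t(z) = det(I - G(z) (t X)) on a disc |z| <= r with |l0|, ||X|| < r < 1.
   On |z| = r we have G(z) t X = F(z) (t X / z) with ||t X / z|| < 1, so
   mu_E(F(z)) < 1 forces q_t(z) ~= 0; also q_0 = 1.  A zero-free homotopy argument
   (Hurwitz's theorem, plus openness of zero-freeness by compactness) shows that
   q_1 has no zeros in |z| < r, contradicting q_1(l0) = det(I - W Y) = 0. *)

definition smat :: "complex \<Rightarrow> complex^'c^'r \<Rightarrow> complex^'c^'r" where
  "smat c A = (\<chi> i j. c * A $ i $ j)"

lemma smat_smat: "smat a (smat b X) = smat (a * b) X"
  by (simp add: smat_def vec_eq_iff mult.assoc)

lemma smat_one: "smat 1 X = X"
  by (simp add: smat_def vec_eq_iff)

lemma smat_zero: "smat 0 X = 0"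
  by (simp add: smat_def vec_eq_iff)

lemma smat_mult: "smat c W ** X = W ** smat c X"
  by (simp add: smat_def matrix_matrix_mult_def vec_eq_iff sum_distrib_left algebra_simps)

lemma smat_in_subspace: "cmat_subspace E \<Longrightarrow> X \<in> E \<Longrightarrow> smat c X \<in> E"
  unfolding cmat_subspace_def smat_def by blast

lemma norm_cvec_scale: "norm (\<chi> i. c * (y::complex^'n) $ i) = cmod c * norm y"
  unfolding norm_vec_def by (simp add: L2_set_right_distrib norm_mult)

lemma opnorm_nonneg: "0 \<le> opnorm X"
  unfolding opnorm_def by (intro onorm_pos_le) auto

lemma opnorm_smat: "opnorm (smat c X) \<le> cmod c * opnorm X"
  unfolding opnorm_def
proof (rule onorm_le)
  fix v
  have "smat c X *v v = (\<chi> i. c * (X *v v) $ i)"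
    by (simp add: smat_def matrix_vector_mult_def vec_eq_iff sum_distrib_left mult.assoc)
  then have "norm (smat c X *v v) = cmod c * norm (X *v v)"
    by (simp add: norm_cvec_scale)
  also have "\<dots> \<le> cmod c * (onorm ((*v) X) * norm v)"
    by (intro mult_left_mono onorm) auto
  finally show "norm (smat c X *v v) \<le> cmod c * onorm ((*v) X) * norm v"
    by (simp add: mult.assoc)
qed

text \<open>If \<open>I - A X\<close> is singular then \<open>1 \<le> \<parallel>A\<parallel> \<parallel>X\<parallel>\<close>: a kernel vector \<open>v\<close> satisfies \<open>v = A X v\<close>.\<close>
lemma singular_opnorm_bound:
  fixes A :: "complex^'n^'m" and X :: "complex^'m^'n"
  assumes "det (mat 1 - A ** X) = 0"
  shows "1 \<le> opnorm A * opnorm X"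
proof -
  have "\<not> invertible (mat 1 - A ** X)" using assms invertible_det_nz by blast
  then have "\<not> (\<forall>x. (mat 1 - A ** X) *v x = 0 \<longrightarrow> x = 0)"
    using invertible_left_inverse matrix_left_invertible_ker by metis
  then obtain v where v: "(mat 1 - A ** X) *v v = 0" "v \<noteq> 0" by blast
  then have fixed: "v = A *v (X *v v)"
    by (simp add: matrix_vector_mult_diff_rdistrib matrix_vector_mul_assoc)
  have "norm v \<le> opnorm A * norm (X *v v)"
    unfolding opnorm_def by (subst fixed) (intro onorm, auto)
  also have "\<dots> \<le> opnorm A * (opnorm X * norm v)"
    unfolding opnorm_def by (intro mult_left_mono onorm onorm_pos_le) auto
  finally have "1 * norm v \<le> (opnorm A * opnorm X) * norm v" by (simp add: mult.assoc)
  then show ?thesis using v(2) by (simp add: mult_le_cancel_right)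
qed

definition destab :: "(complex^'m^'n) set \<Rightarrow> complex^'n^'m \<Rightarrow> (complex^'m^'n) set" where
  "destab E A = {X \<in> E. det (mat 1 - A ** X) = 0}"

lemma mu_destab: "mu E A = (if destab E A = {} then 0 else 1 / Inf (opnorm ` destab E A))"
  unfolding mu_def destab_def ..

lemma bdd_below_opnorm: "bdd_below (opnorm ` S)"
  by (rule bdd_belowI[where m = 0]) (auto simp: opnorm_nonneg)

text \<open>The infimum is positive: every destabilising \<open>X\<close> has norm at least \<open>1/\<parallel>A\<parallel>\<close>.\<close>
lemma Inf_destab_pos:
  assumes "destab E A \<noteq> {}"
  shows "Inf (opnorm ` destab E A) > 0"
proof -
  obtain X0 where "X0 \<in> destab E A" using assms by blast
  then have "1 \<le> opnorm A * opnorm X0"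
    by (intro singular_opnorm_bound) (simp add: destab_def)
  then have A: "opnorm A > 0" using opnorm_nonneg[of A] by (cases "opnorm A = 0") auto
  have "1 / opnorm A \<le> Inf (opnorm ` destab E A)"
  proof (rule cInf_greatest)
    fix y assume "y \<in> opnorm ` destab E A"
    then obtain X where "y = opnorm X" "det (mat 1 - A ** X) = 0" by (auto simp: destab_def)
    then show "1 / opnorm A \<le> y"
      using singular_opnorm_bound[of A X] A by (simp add: divide_le_eq mult.commute)
  qed (use assms in auto)
  then show ?thesis using A by (smt (verit) divide_pos_pos)
qed

lemma mu_nonneg: "0 \<le> mu E A"
  unfolding mu_destab using Inf_destab_pos[of E A] by (simp add: less_imp_le)

lemma mu_zero: "mu E 0 = 0"
  unfolding mu_destab destab_def by simp

lemma mu_lt1_det_nonzero: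
  assumes "mu E A < 1" "X \<in> E" "opnorm X \<le> 1"
  shows "det (mat 1 - A ** X) \<noteq> 0"
proof
  assume "det (mat 1 - A ** X) = 0"
  then have X: "X \<in> destab E A" using assms(2) by (simp add: destab_def)
  then have "Inf (opnorm ` destab E A) \<le> 1"
    using cInf_lower[OF imageI[OF X] bdd_below_opnorm] assms(3) by linarith
  then have "1 \<le> mu E A"
    using X Inf_destab_pos[of E A] unfolding mu_destab by (auto simp: le_divide_eq)
  then show False using assms(1) by simp
qed

lemma mu_gt_destab:
  assumes "mu E A > a" "a > 0"
  obtains Y where "Y \<in> E" "det (mat 1 - A ** Y) = 0" "opnorm Y < 1 / a"
proof -
  have ne: "destab E A \<noteq> {}" using assms unfolding mu_destab by (auto split: if_splits)
  have "a < 1 / Inf (opnorm ` destab E A)" using assms ne unfolding mu_destab by simp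
  then have "Inf (opnorm ` destab E A) < 1 / a"
    using Inf_destab_pos[OF ne] assms(2) by (simp add: field_simps)
  then obtain y where "y \<in> opnorm ` destab E A" "y < 1 / a"
    using ne by (meson cInf_lessD image_is_empty)
  then show ?thesis using that by (auto simp: destab_def)
qed

text \<open>Homogeneity from above: \<open>\<mu>\<^sub>E(c A) \<le> |c| \<mu>\<^sub>E(A)\<close>, since \<open>X\<close> destabilises \<open>c A\<close>
  exactly when \<open>c X\<close> destabilises \<open>A\<close>.\<close>
lemma mu_smat_le:
  assumes E: "cmat_subspace E"
  shows "mu E (smat c A) \<le> cmod c * mu E A"
proof (cases "c = 0 \<or> destab E (smat c A) = {}")
  case True
  then have "mu E (smat c A) = 0" by (metis mu_zero smat_zero mu_destab)
  then show ?thesis using mu_nonneg[of E A] by simp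
next
  case False
  then have c: "c \<noteq> 0" and ne': "destab E (smat c A) \<noteq> {}" by auto
  have scaled: "smat c X \<in> destab E A" if "X \<in> destab E (smat c A)" for X
    using that smat_in_subspace[OF E] by (auto simp: destab_def smat_mult)
  then have ne: "destab E A \<noteq> {}" using ne' by blast
  have p: "Inf (opnorm ` destab E A) > 0" by (rule Inf_destab_pos[OF ne])
  have "Inf (opnorm ` destab E A) / cmod c \<le> Inf (opnorm ` destab E (smat c A))"
  proof (rule cInf_greatest)
    fix y assume "y \<in> opnorm ` destab E (smat c A)"
    then obtain X where X: "X \<in> destab E (smat c A)" "y = opnorm X" by blast
    have "Inf (opnorm ` destab E A) \<le> opnorm (smat c X)"
      by (rule cInf_lower[OF imageI[OF scaled[OF X(1)]] bdd_below_opnorm])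
    also have "\<dots> \<le> cmod c * opnorm X" by (rule opnorm_smat)
    finally show "Inf (opnorm ` destab E A) / cmod c \<le> y"
      using X c by (simp add: divide_le_eq mult.commute)
  qed (use ne' in auto)
  then have "1 / Inf (opnorm ` destab E (smat c A)) \<le> 1 / (Inf (opnorm ` destab E A) / cmod c)"
    using p c Inf_destab_pos[OF ne'] by (intro divide_left_mono) auto
  then show ?thesis using ne ne' unfolding mu_destab by simp
qed

lemma logplus_mono: "x \<le> y \<Longrightarrow> logplus x \<le> logplus y"
  unfolding logplus_def by auto

text \<open>Linear functions are of Nevanlinna class: \<open>log\<^sup>+\<close> of their modulus on \<open>|z| = r < 1\<close>
  is bounded by \<open>log\<^sup>+ |a|\<close>.\<close>
lemma nevanlinna_linear: "nevanlinna (\<lambda>z. a * z)"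
  unfolding nevanlinna_def
proof
  show "(\<lambda>z. a * z) holomorphic_on ball 0 1" by (intro holomorphic_intros)
  show "bdd_above ((\<lambda>r. integral {0..2*pi} (\<lambda>t. logplus (cmod (a * (complex_of_real r * cis t))))) ` {0<..<1})"
  proof (rule bdd_aboveI2)
    fix r :: real assume r: "r \<in> {0<..<1}"
    have "integral {0..2*pi} (\<lambda>t. logplus (cmod (a * (complex_of_real r * cis t))))
        = 2*pi * logplus (cmod a * r)"
      using r by (simp add: norm_mult)
    also have "\<dots> \<le> 2*pi * logplus (cmod a)"
      using r by (intro mult_left_mono logplus_mono) (auto simp: mult_left_le)
    finally show "integral {0..2*pi} (\<lambda>t. logplus (cmod (a * (complex_of_real r * cis t))))
        \<le> 2*pi * logplus (cmod a)" .
  qed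
qed

lemma linear_interpolant:
  fixes E :: "(complex^'m^'n) set" and W :: "complex^'n^'m"
  assumes E: "cmat_subspace E" and l0: "l0 \<in> ball 0 1" "l0 \<noteq> 0" and W: "mu E W \<le> cmod l0"
  shows "\<exists>F :: complex \<Rightarrow> complex^'n^'m. (\<forall>i j. nevanlinna (\<lambda>z. F z $ i $ j)) \<and>
           F 0 = 0 \<and> F l0 = W \<and> (\<forall>z\<in>ball 0 1. mu E (F z) < 1)"
proof (intro exI conjI allI ballI)
  let ?F = "\<lambda>z. smat (z / l0) W"
  show "nevanlinna (\<lambda>z. ?F z $ i $ j)" for i j
    using nevanlinna_linear[of "W $ i $ j / l0"] by (simp add: smat_def mult.commute)
  show "?F 0 = 0" "?F l0 = W" using l0 by (simp_all add: smat_zero smat_one)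
  fix z :: complex assume z: "z \<in> ball 0 1"
  have "mu E (?F z) \<le> cmod (z / l0) * mu E W" by (rule mu_smat_le[OF E])
  also have "\<dots> \<le> cmod (z / l0) * cmod l0" using W by (intro mult_left_mono) auto
  also have "\<dots> = cmod z" using l0 by (simp add: norm_divide)
  finally show "mu E (?F z) < 1" using z by simp
qed

lemma continuous_on_slice:
  assumes "continuous_on (T \<times> K) (\<lambda>p. q (fst p) (snd p))" "t \<in> T"
  shows "continuous_on K (q t)"
proof -
  have "continuous_on K (\<lambda>z. (\<lambda>p. q (fst p) (snd p)) (t, z))"
    by (rule continuous_on_compose2[OF assms(1)]) (use assms(2) in \<open>auto intro!: continuous_intros\<close>)
  then show ?thesis by simp
qed

lemma uniform_continuity_in_parameter:
  fixes q :: "real \<Rightarrow> 'a::metric_space \<Rightarrow> 'b::metric_space"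
  assumes T: "compact T" and K: "compact K"
    and cont: "continuous_on (T \<times> K) (\<lambda>p. q (fst p) (snd p))" and e: "e > 0"
  obtains d where "d > 0"
    "\<And>t t' z. t \<in> T \<Longrightarrow> t' \<in> T \<Longrightarrow> z \<in> K \<Longrightarrow> \<bar>t - t'\<bar> < d \<Longrightarrow> dist (q t z) (q t' z) < e"
proof -
  have "uniformly_continuous_on (T \<times> K) (\<lambda>p. q (fst p) (snd p))"
    by (rule compact_uniformly_continuous[OF cont compact_Times[OF T K]])
  then obtain d where d: "d > 0" and
    close: "\<forall>x\<in>T \<times> K. \<forall>x'\<in>T \<times> K. dist x' x < d \<longrightarrow> dist (q (fst x') (snd x')) (q (fst x) (snd x)) < e"
    using e unfolding uniformly_continuous_on_def by metis
  show ?thesis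
  proof (rule that[OF d])
    fix t t' z assume "t \<in> T" "t' \<in> T" "z \<in> K" "\<bar>t - t'\<bar> < d"
    then show "dist (q t z) (q t' z) < e"
      using close[rule_format, of "(t', z)" "(t, z)"] by (simp add: dist_Pair_Pair dist_real_def)
  qed
qed

text \<open>Zero-freeness on a compact set persists under small changes of the parameter:
  \<open>|q \<tau>|\<close> is bounded below there, and nearby slices are uniformly close to \<open>q \<tau>\<close>.\<close>
lemma zero_free_persists:
  fixes q :: "real \<Rightarrow> 'a::metric_space \<Rightarrow> complex"
  assumes T: "compact T" and K: "compact K"
    and cont: "continuous_on (T \<times> K) (\<lambda>p. q (fst p) (snd p))"
    and \<tau>: "\<tau> \<in> T" and nz: "\<And>z. z \<in> K \<Longrightarrow> q \<tau> z \<noteq> 0"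
  obtains d where "d > 0" "\<And>t z. t \<in> T \<Longrightarrow> z \<in> K \<Longrightarrow> \<bar>t - \<tau>\<bar> < d \<Longrightarrow> q t z \<noteq> 0"
proof (cases "K = {}")
  case True
  then show ?thesis using that[of 1] by auto
next
  case False
  have "continuous_on K (\<lambda>z. cmod (q \<tau> z))"
    using continuous_on_slice[OF cont \<tau>] by (intro continuous_intros)
  then obtain z0 where z0: "z0 \<in> K" "\<And>z. z \<in> K \<Longrightarrow> cmod (q \<tau> z0) \<le> cmod (q \<tau> z)"
    using continuous_attains_inf[OF K False] by blast
  have "cmod (q \<tau> z0) > 0" using nz[OF z0(1)] by simp
  then obtain d where d: "d > 0"
    "\<And>t t' z. t \<in> T \<Longrightarrow> t' \<in> T \<Longrightarrow> z \<in> K \<Longrightarrow> \<bar>t - t'\<bar> < d \<Longrightarrow> dist (q t z) (q t' z) < cmod (q \<tau> z0)"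
    using uniform_continuity_in_parameter[OF T K cont] by metis
  show ?thesis
  proof (rule that[OF d(1)])
    fix t z assume tz: "t \<in> T" "z \<in> K" "\<bar>t - \<tau>\<bar> < d"
    have "cmod (q t z - q \<tau> z) < cmod (q \<tau> z)"
      using d(2)[OF tz(1) \<tau> tz(2,3)] z0(2)[OF tz(2)] by (simp add: dist_norm)
    then show "q t z \<noteq> 0" by auto
  qed
qed

text \<open>The boundary condition
  rules out the identically zero limit, which Hurwitz's theorem itself excludes.\<close>
lemma Hurwitz_zero_free_disc:
  fixes f :: "nat \<Rightarrow> complex \<Rightarrow> complex" and g :: "complex \<Rightarrow> complex"
  assumes r: "r > 0"
    and holf: "\<And>k. f k holomorphic_on ball c r" and nzf: "\<And>k z. z \<in> ball c r \<Longrightarrow> f k z \<noteq> 0"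
    and holg: "g holomorphic_on ball c r" and contg: "continuous_on (cball c r) g"
    and lim: "uniform_limit (cball c r) f g sequentially"
    and bdy: "\<And>z. z \<in> sphere c r \<Longrightarrow> g z \<noteq> 0"
    and z: "z \<in> ball c r"
  shows "g z \<noteq> 0"
proof (cases "g constant_on ball c r")
  case True
  then obtain k where k: "\<And>w. w \<in> ball c r \<Longrightarrow> g w = k" unfolding constant_on_def by blast
  have edge: "c + of_real r \<in> sphere c r" using r by (simp add: dist_norm)
  then have "g (c + of_real r) = k"
    using continuous_constant_on_closure[of "ball c r" g k] contg k r by (simp add: closure_ball)
  then show ?thesis using bdy[OF edge] k[OF z] by simp
next
  case False
  show ?thesis
  proof (rule Hurwitz_no_zeros[OF _ _ holf holg _ False nzf z])
    show "uniform_limit K f g sequentially" if "compact K" "K \<subseteq> ball c r" for K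
      using that(2) ball_subset_cball by (blast intro: uniform_limit_on_subset[OF lim])
  qed auto
qed

text \<open>In a continuous family of holomorphic functions on a disc, zero-free before time \<open>\<tau>\<close>
  and non-vanishing on the boundary at time \<open>\<tau>\<close>, the function at time \<open>\<tau>\<close> is zero-free:
  approach \<open>\<tau>\<close> from below and apply Hurwitz's theorem.\<close>
lemma zero_free_at_limit_time:
  fixes q :: "real \<Rightarrow> complex \<Rightarrow> complex"
  assumes r: "r > 0"
    and cont: "continuous_on ({0..1} \<times> cball 0 r) (\<lambda>p. q (fst p) (snd p))"
    and hol: "\<And>t. t \<in> {0..1} \<Longrightarrow> q t holomorphic_on ball 0 r"
    and \<tau>: "0 < \<tau>" "\<tau> \<le> 1"
    and bdy: "\<And>z. z \<in> sphere 0 r \<Longrightarrow> q \<tau> z \<noteq> 0"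
    and before: "\<And>t z. 0 \<le> t \<Longrightarrow> t < \<tau> \<Longrightarrow> z \<in> ball 0 r \<Longrightarrow> q t z \<noteq> 0"
    and z: "z \<in> ball 0 r"
  shows "q \<tau> z \<noteq> 0"
proof -
  define tk where "tk = (\<lambda>k::nat. \<tau> - \<tau> / (real k + 2))"
  have tk: "0 \<le> tk k" "tk k < \<tau>" for k
    using \<tau> unfolding tk_def by (auto simp: field_simps)
  have "tk \<longlonglongrightarrow> \<tau>" unfolding tk_def by real_asymp
  have lim: "uniform_limit (cball 0 r) (\<lambda>k. q (tk k)) (q \<tau>) sequentially"
  proof (rule uniform_limitI)
    fix e :: real assume "e > 0"
    then obtain d where d: "d > 0"
      "\<And>t t' z. t \<in> {0..1} \<Longrightarrow> t' \<in> {0..1} \<Longrightarrow> z \<in> cball 0 r \<Longrightarrow> \<bar>t - t'\<bar> < d \<Longrightarrow> dist (q t z) (q t' z) < e"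
      using uniform_continuity_in_parameter[OF compact_Icc compact_cball cont] by metis
    have "\<forall>\<^sub>F k in sequentially. \<bar>tk k - \<tau>\<bar> < d"
      using tendstoD[OF \<open>tk \<longlonglongrightarrow> \<tau>\<close> d(1)] by (simp add: dist_real_def)
    then show "\<forall>\<^sub>F k in sequentially. \<forall>w\<in>cball 0 r. dist (q (tk k) w) (q \<tau> w) < e"
    proof eventually_elim
      case (elim k)
      have "tk k \<in> {0..1}" "\<tau> \<in> {0..1}" using tk[of k] \<tau> by auto
      then show ?case using d(2) elim by blast
    qed
  qed
  have hol_tk: "q (tk k) holomorphic_on ball 0 r" for k
    using hol tk[of k] \<tau> by auto
  have hol_\<tau>: "q \<tau> holomorphic_on ball 0 r" and cont_\<tau>: "continuous_on (cball 0 r) (q \<tau>)"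
    using hol continuous_on_slice[OF cont] \<tau> by auto
  show ?thesis
    by (rule Hurwitz_zero_free_disc[OF r hol_tk before[OF tk] hol_\<tau> cont_\<tau> lim bdy z])
qed

text \<open>Otherwise let \<open>\<tau>\<close> be the first time a zero appears; \<open>q \<tau>\<close> is still zero-free on the
  closed disc by Hurwitz, hence so are the nearby slices -- contradicting the choice of \<open>\<tau>\<close>.\<close>
lemma homotopy_zero_free:
  fixes q :: "real \<Rightarrow> complex \<Rightarrow> complex"
  assumes r: "r > 0"
    and cont: "continuous_on ({0..1} \<times> cball 0 r) (\<lambda>p. q (fst p) (snd p))"
    and hol: "\<And>t. t \<in> {0..1} \<Longrightarrow> q t holomorphic_on ball 0 r"
    and bdy: "\<And>t z. t \<in> {0..1} \<Longrightarrow> z \<in> sphere 0 r \<Longrightarrow> q t z \<noteq> 0"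
    and start: "\<And>z. z \<in> ball 0 r \<Longrightarrow> q 0 z \<noteq> 0"
    and t1: "t1 \<in> {0..1}" and z1: "z1 \<in> ball 0 r"
  shows "q t1 z1 \<noteq> 0"
proof
  assume "q t1 z1 = 0"
  define B where "B = {t \<in> {0..1}. \<exists>z\<in>ball 0 r. q t z = 0}"
  define \<tau> where "\<tau> = Inf B"
  have t1B: "t1 \<in> B" using t1 z1 \<open>q t1 z1 = 0\<close> unfolding B_def by blast
  have bddB: "bdd_below B" unfolding B_def by (rule bdd_belowI[where m = 0]) auto
  have first: "\<tau> \<le> b" if "b \<in> B" for b unfolding \<tau>_def using that bddB by (rule cInf_lower)
  have "0 \<le> \<tau>" unfolding \<tau>_def using t1B by (intro cInf_greatest) (auto simp: B_def)
  moreover have "\<tau> \<le> 1" using first[OF t1B] t1 by simp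
  ultimately have \<tau>01: "0 \<le> \<tau>" "\<tau> \<le> 1" and \<tau>I: "\<tau> \<in> {0..1}" by auto
  have before: "q t z \<noteq> 0" if t: "0 \<le> t" "t < \<tau>" and z: "z \<in> ball 0 r" for t z
  proof
    assume "q t z = 0"
    then have "t \<in> B" using t z \<tau>01 unfolding B_def by auto
    then show False using first[of t] t(2) by simp
  qed
  have at_\<tau>: "q \<tau> z \<noteq> 0" if z: "z \<in> cball 0 r" for z
  proof (cases "z \<in> sphere 0 r")
    case True
    then show ?thesis using bdy \<tau>01 by auto
  next
    case False
    then have z': "z \<in> ball 0 r" using z by auto
    show ?thesis
    proof (cases "\<tau> = 0")
      case True
      then show ?thesis using start[OF z'] by simp
    next
      case False
      have bdy_\<tau>: "\<And>w. w \<in> sphere 0 r \<Longrightarrow> q \<tau> w \<noteq> 0" using bdy \<tau>01 by auto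
      show ?thesis
        by (rule zero_free_at_limit_time[OF r cont hol _ _ bdy_\<tau> before z']) (use False \<tau>01 in auto)
    qed
  qed
  obtain d where d: "d > 0" "\<And>t z. t \<in> {0..1} \<Longrightarrow> z \<in> cball 0 r \<Longrightarrow> \<bar>t - \<tau>\<bar> < d \<Longrightarrow> q t z \<noteq> 0"
    using zero_free_persists[OF compact_Icc compact_cball cont \<tau>I at_\<tau>] by blast
  have "Inf B < \<tau> + d" using d(1) unfolding \<tau>_def by simp
  then obtain b where b: "b \<in> B" "b < \<tau> + d"
    using cInf_lessD[of B] t1B by blast
  then obtain z where z: "b \<in> {0..1}" "z \<in> ball 0 r" "q b z = 0" unfolding B_def by blast
  have "\<bar>b - \<tau>\<bar> < d" using first[OF b(1)] b(2) by simp
  then show False using d(2)[of b z] z by auto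
qed

text \<open>A holomorphic matrix function vanishing at \<open>0\<close> factors as \<open>F(z) = z G(z)\<close> with \<open>G\<close>
  holomorphic (removable singularity of \<open>F(z)/z\<close>).\<close>
lemma holomorphic_matrix_factor_z:
  fixes F :: "complex \<Rightarrow> complex^'n^'m"
  assumes hol: "\<And>i j. (\<lambda>z. F z $ i $ j) holomorphic_on S" and S: "0 \<in> interior S" and F0: "F 0 = 0"
  obtains G :: "complex \<Rightarrow> complex^'n^'m"
  where "\<And>i j. (\<lambda>z. G z $ i $ j) holomorphic_on S" "\<And>z. F z = smat z (G z)"
proof
  define G where "G = (\<lambda>z. \<chi> i j. if z = 0 then deriv (\<lambda>w. F w $ i $ j) 0 else F z $ i $ j / z)"
  show "(\<lambda>z. G z $ i $ j) holomorphic_on S" for i j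
  proof -
    have "(\<lambda>z. G z $ i $ j) =
          (\<lambda>z. if z = 0 then deriv (\<lambda>w. F w $ i $ j) 0 else (F z $ i $ j - F 0 $ i $ j) / (z - 0))"
      using F0 by (auto simp: G_def)
    then show ?thesis using pole_lemma[OF hol S] by simp
  qed
  show "F z = smat z (G z)" for z
    using F0 by (cases "z = 0") (auto simp: smat_def G_def vec_eq_iff)
qed

lemma holomorphic_on_det:
  fixes M :: "complex \<Rightarrow> complex^'n^'n"
  assumes "\<And>i j. (\<lambda>x. M x $ i $ j) holomorphic_on S"
  shows "(\<lambda>x. det (M x)) holomorphic_on S"
  unfolding det_def by (intro holomorphic_intros assms)

lemma continuous_on_det:
  fixes M :: "'a::topological_space \<Rightarrow> complex^'n^'n"
  assumes "\<And>i j. continuous_on S (\<lambda>x. M x $ i $ j)"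
  shows "continuous_on S (\<lambda>x. det (M x))"
  unfolding det_def by (intro continuous_intros assms)

lemma entry_det_family:
  "(mat 1 - G ** smat c X) $ i $ j = (if i = j then 1 else 0) - (\<Sum>k\<in>UNIV. G $ i $ k * (c * X $ k $ j))"
  by (simp add: matrix_matrix_mult_def smat_def mat_def)

lemma det_family_regular:
  fixes G :: "complex \<Rightarrow> complex^'n^'m" and X :: "complex^'m^'n"
  assumes hol: "\<And>i j. (\<lambda>z. G z $ i $ j) holomorphic_on S" and K: "K \<subseteq> S"
  shows "continuous_on (T \<times> K) (\<lambda>p. det (mat 1 - G (snd p) ** smat (of_real (fst p)) X))"
    and "(\<lambda>z. det (mat 1 - G z ** smat (of_real t) X)) holomorphic_on S"
proof -
  have "continuous_on K (\<lambda>z. G z $ i $ j)" for i j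
    using holomorphic_on_imp_continuous_on[OF hol] K continuous_on_subset by blast
  then have contG: "continuous_on (T \<times> K) (\<lambda>p. G (snd p) $ i $ j)" for i j
    by (rule continuous_on_compose2) (auto intro: continuous_intros)
  show "continuous_on (T \<times> K) (\<lambda>p. det (mat 1 - G (snd p) ** smat (of_real (fst p)) X))"
    by (intro continuous_on_det, unfold entry_det_family) (intro continuous_intros contG)
  show "(\<lambda>z. det (mat 1 - G z ** smat (of_real t) X)) holomorphic_on S"
    by (intro holomorphic_on_det, unfold entry_det_family) (intro holomorphic_intros hol)
qed

text \<open>If \<open>F(z) = z G(z)\<close> with \<open>\<mu>\<^sub>E(F(z)) < 1\<close> and \<open>\<parallel>X\<parallel> \<le> |z|\<close>, then \<open>I - G(z) (t X)\<close> is invertible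
  for \<open>t \<in> [0,1]\<close>: it equals \<open>I - F(z) (t X / z)\<close> with \<open>\<parallel>t X / z\<parallel> \<le> 1\<close>.\<close>
lemma det_family_nonzero:
  assumes E: "cmat_subspace E" and X: "X \<in> E" "opnorm X \<le> cmod z"
    and z: "z \<noteq> 0" and mu: "mu E (F z) < 1" and FG: "F z = smat z (G z)"
    and t: "0 \<le> t" "t \<le> 1"
  shows "det (mat 1 - G z ** smat (of_real t) X) \<noteq> 0"
proof -
  have eq: "G z ** smat (of_real t) X = F z ** smat (of_real t / z) X"
    using z by (simp add: FG smat_mult smat_smat)
  have "opnorm (smat (of_real t / z) X) \<le> cmod (of_real t / z) * opnorm X"
    by (rule opnorm_smat)
  also have "\<dots> = t * (opnorm X / cmod z)" using t by (simp add: norm_divide)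
  also have "\<dots> \<le> 1 * 1"
    using t X(2) z by (intro mult_mono) (auto simp: opnorm_nonneg)
  finally have "opnorm (smat (of_real t / z) X) \<le> 1" by simp
  then show ?thesis
    unfolding eq by (rule mu_lt1_det_nonzero[OF mu smat_in_subspace[OF E X(1)]])
qed

text \<open>A destabilising \<open>Y\<close> for \<open>W = F(\<lambda>)\<close> with
  \<open>|\<lambda>| \<parallel>Y\<parallel> < 1\<close> would make \<open>det(I - G(z) (t \<lambda> Y))\<close> a zero-free homotopy with a zero at
  \<open>t = 1\<close>, \<open>z = \<lambda>\<close>.\<close>
lemma mu_schwarz_lemma:
  fixes E :: "(complex^'m^'n) set" and F :: "complex \<Rightarrow> complex^'n^'m"
  assumes E: "cmat_subspace E"
    and hol: "\<And>i j. (\<lambda>z. F z $ i $ j) holomorphic_on ball 0 1"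
    and F0: "F 0 = 0" and small: "\<forall>z\<in>ball 0 1. mu E (F z) < 1"
    and l: "l \<in> ball 0 1"
  shows "mu E (F l) \<le> cmod l"
proof (rule ccontr)
  assume "\<not> mu E (F l) \<le> cmod l"
  then have gt: "mu E (F l) > cmod l" by simp
  then have "l \<noteq> 0" using F0 mu_zero[of E] by auto
  then obtain Y where Y: "Y \<in> E" "det (mat 1 - F l ** Y) = 0" "opnorm Y < 1 / cmod l"
    using mu_gt_destab[OF gt] by auto
  define X where "X = smat l Y"
  have XE: "X \<in> E" unfolding X_def by (rule smat_in_subspace[OF E Y(1)])
  have "opnorm X \<le> cmod l * opnorm Y" unfolding X_def by (rule opnorm_smat)
  also have "\<dots> < 1" using Y(3) \<open>l \<noteq> 0\<close> by (simp add: field_simps)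
  finally have X1: "opnorm X < 1" .
  define r where "r = (max (opnorm X) (cmod l) + 1) / 2"
  have r: "0 < r" "opnorm X \<le> r" "l \<in> ball 0 r" "r < 1"
    using X1 opnorm_nonneg[of X] l \<open>l \<noteq> 0\<close> unfolding r_def by auto
  obtain G :: "complex \<Rightarrow> complex^'n^'m" where
    holG: "\<And>i j. (\<lambda>z. G z $ i $ j) holomorphic_on ball 0 1" and FG: "\<And>z. F z = smat z (G z)"
    using holomorphic_matrix_factor_z[OF hol _ F0] by auto
  let ?q = "\<lambda>(t::real) z. det (mat 1 - G z ** smat (of_real t) X)"
  have sub: "cball 0 r \<subseteq> ball (0::complex) 1" using r by auto
  have "?q 1 l \<noteq> 0"
  proof (rule homotopy_zero_free[of r ?q 1 l])
    show "continuous_on ({0..1} \<times> cball 0 r) (\<lambda>p. ?q (fst p) (snd p))"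
      using det_family_regular(1)[OF holG sub] by simp
    show "?q t holomorphic_on ball 0 r" for t
      using det_family_regular(2)[OF holG order_refl] by (rule holomorphic_on_subset) (use r in auto)
    show "?q t z \<noteq> 0" if t: "t \<in> {0..1}" and z: "z \<in> sphere 0 r" for t z
    proof (rule det_family_nonzero[OF E XE _ _ _ FG])
      show "opnorm X \<le> cmod z" "z \<noteq> 0" using z r(1,2) by auto
      show "mu E (F z) < 1" using small z r(4) by auto
    qed (use t in auto)
    show "?q 0 z \<noteq> 0" for z
      by (simp add: smat_zero)
  qed (use r in auto)
  moreover have "F l ** Y = G l ** smat (of_real 1) X"
    unfolding FG smat_mult X_def smat_smat by simp
  ultimately show False using Y(2) by simp
qed

theorem proposition10p3:
  fixes E :: "(complex^'m::finite^'n::finite) set"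
    and W :: "complex^'n^'m"
    and l0 :: complex
  assumes "cmat_subspace E"
    and "l0 \<in> ball 0 1" and "l0 \<noteq> 0"
  shows "(\<exists>F :: complex \<Rightarrow> complex^'n^'m.
            (\<forall>i j. nevanlinna (\<lambda>z. F z $ i $ j)) \<and>
            F 0 = 0 \<and> F l0 = W \<and> (\<forall>z\<in>ball 0 1. mu E (F z) < 1))
         \<longleftrightarrow> mu E W \<le> cmod l0"
proof
  assume "\<exists>F :: complex \<Rightarrow> complex^'n^'m.
            (\<forall>i j. nevanlinna (\<lambda>z. F z $ i $ j)) \<and>
            F 0 = 0 \<and> F l0 = W \<and> (\<forall>z\<in>ball 0 1. mu E (F z) < 1)"
  then obtain F :: "complex \<Rightarrow> complex^'n^'m" where
    nev: "\<forall>i j. nevanlinna (\<lambda>z. F z $ i $ j)" and F: "F 0 = 0" "F l0 = W"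
    and small: "\<forall>z\<in>ball 0 1. mu E (F z) < 1"
    by blast
  have "\<And>i j. (\<lambda>z. F z $ i $ j) holomorphic_on ball 0 1"
    using nev by (simp add: nevanlinna_def)
  from mu_schwarz_lemma[OF assms(1) this F(1) small assms(2)]
  show "mu E W \<le> cmod l0" using F(2) by simp
next
  assume "mu E W \<le> cmod l0"
  then show "\<exists>F :: complex \<Rightarrow> complex^'n^'m.
            (\<forall>i j. nevanlinna (\<lambda>z. F z $ i $ j)) \<and>
            F 0 = 0 \<and> F l0 = W \<and> (\<forall>z\<in>ball 0 1. mu E (F z) < 1)"
    by (rule linear_interpolant[OF assms])
qed

end
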